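(* Let $\mathcal G$, $A$, $\Phi$ be as in the standing setting, let $c:\mathcal G\to\mathbb R$ be a continuous groupoid homomorphism and $\beta\in\mathbb R$. If $\omega$ is a $\beta$-KMS state for $\alpha^c$ on $C^*(\mathcal G)$ such that $\omega\circ\Psi_\xi=\omega$ for all $\xi\in\hat A$, then $\omega=\omega\circ P$.
   Context: Standing setting: $\mathcal G$ is a locally compact, second countable, Hausdorff étale groupoid with compact unit space $\mathcal G^{(0)}$, range and source maps $r,s$, and isotropy groups $\mathcal G_x^x=\{g\in\mathcal G: r(g)=s(g)=x\}$; $A$ is a countable discrete abelian group and $\Phi:\mathcal G\to A$ is a continuous groupoid homomorphism with $\ker(\Phi)\cap\mathcal G_x^x=\{x\}$ for all $x\in\mathcal G^{(0)}$. $C^*(\mathcal G)$ is the full groupoid $C^*$-algebra (completion of $C_c(\mathcal G)$ with product $(f_1*f_2)(g)=\sum_{h\in r^{-1}(r(g))}f_1(h)f_2(h^{-1}g)$ and involution $f^*(g)=\overline{f(g^{-1})}$), and $P:C^*(\mathcal G)\to C(\mathcal G^{(0)})$ is the conditional expectation extending restriction of functions in $C_c(\mathcal G)$ to $\mathcal G^{(0)}$. $\hat A$ is the compact dual group of characters $A\to\mathbb T$ (pointwise topology); for $\xi\in\hat A$, $\Psi_\xi$ is the automorphism of $C^*(\mathcal G)$ with $\Psi_\xi(f)(g)=\xi(\Phi(g))f(g)$ for $f\in C_c(\mathcal G)$ (the gauge action). For a continuous homomorphism $c:\mathcal G\to\mathbb R$, $\alpha^c$ is the one-parameter automorphism group of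 $C^*(\mathcal G)$ with $\alpha^c_t(f)(g)=e^{itc(g)}f(g)$. For $\beta\in\mathbb R$, a $\beta$-KMS state for $\alpha^c$ is a state $\omega$ on $C^*(\mathcal G)$ with $\omega(fh)=\omega(h\,\alpha^c_{i\beta}(f))$ for all $f,h\in C_c(\mathcal G)$, where $\alpha^c_{i\beta}(f)(g)=e^{-\beta c(g)}f(g)$. *)

theory Defs
  imports "HOL-Analysis.Analysis"
begin

text \<open>A topological groupoid whose set of arrows is the whole type 'g
(with its topology). Data: unit space G0, range r, source s,
multiplication m (meaningful on composable pairs s g = r h), inverse i.\<close>

definition groupoid ::
  "'g set \<Rightarrow> ('g \<Rightarrow> 'g) \<Rightarrow> ('g \<Rightarrow> 'g) \<Rightarrow> ('g \<Rightarrow> 'g \<Rightarrow> 'g) \<Rightarrow> ('g \<Rightarrow> 'g) \<Rightarrow> bool"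
  where "groupoid G0 r s m i \<longleftrightarrow>
     (\<forall>g. r g \<in> G0 \<and> s g \<in> G0) \<and>
     (\<forall>u\<in>G0. r u = u \<and> s u = u) \<and>
     (\<forall>g h. s g = r h \<longrightarrow> r (m g h) = r g \<and> s (m g h) = s h) \<and>
     (\<forall>g h k. s g = r h \<and> s h = r k \<longrightarrow> m (m g h) k = m g (m h k)) \<and>
     (\<forall>g. m (r g) g = g \<and> m g (s g) = g) \<and>
     (\<forall>g. s (i g) = r g \<and> r (i g) = s g \<and> m g (i g) = r g \<and> m (i g) g = s g)"

definition etale_groupoid ::
  "'g::{t2_space,second_countable_topology} set \<Rightarrow> ('g \<Rightarrow> 'g) \<Rightarrow> ('g \<Rightarrow> 'g)
     \<Rightarrow> ('g \<Rightarrow> 'g \<Rightarrow> 'g) \<Rightarrow> ('g \<Rightarrow> 'g) \<Rightarrow> bool"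
  where "etale_groupoid G0 r s m i \<longleftrightarrow>
     groupoid G0 r s m i \<and>
     locally_compact_space (euclidean :: 'g topology) \<and>
     continuous_on UNIV r \<and> continuous_on UNIV s \<and> continuous_on UNIV i \<and>
     continuous_on {(g, h). s g = r h} (\<lambda>(g, h). m g h) \<and>
     compact G0 \<and>
     (\<forall>g. \<exists>U. open U \<and> g \<in> U \<and> open (r ` U) \<and> inj_on r U \<and>
                continuous_on (r ` U) (inv_into U r))"

text \<open>Continuous groupoid homomorphism into a (discrete) group: continuity
into a discrete space means all fibres are open.\<close>

definition discrete_cocycle :: "('g \<Rightarrow> 'g) \<Rightarrow> ('g \<Rightarrow> 'g) \<Rightarrow> ('g \<Rightarrow> 'g \<Rightarrow> 'g) \<Rightarrow> ('g::topological_space \<Rightarrow> 'a::ab_group_add) \<Rightarrow> bool"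
  where "discrete_cocycle r s m \<Phi> \<longleftrightarrow>
     (\<forall>a. open (\<Phi> -` {a})) \<and> (\<forall>g h. s g = r h \<longrightarrow> \<Phi> (m g h) = \<Phi> g + \<Phi> h)"

definition real_cocycle :: "('g \<Rightarrow> 'g) \<Rightarrow> ('g \<Rightarrow> 'g) \<Rightarrow> ('g \<Rightarrow> 'g \<Rightarrow> 'g) \<Rightarrow> ('g::topological_space \<Rightarrow> real) \<Rightarrow> bool"
  where "real_cocycle r s m c \<longleftrightarrow>
     continuous_on UNIV c \<and> (\<forall>g h. s g = r h \<longrightarrow> c (m g h) = c g + c h)"

definition character :: "('a::ab_group_add \<Rightarrow> complex) \<Rightarrow> bool"
  where "character \<xi> \<longleftrightarrow> (\<forall>a b. \<xi> (a + b) = \<xi> a * \<xi> b) \<and> (\<forall>a. norm (\<xi> a) = 1)"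

definition Cc :: "('g::topological_space \<Rightarrow> complex) set"
  where "Cc = {f. continuous_on UNIV f \<and> compact (closure {g. f g \<noteq> 0})}"

text \<open>Convolution: sum over h with r h = r g (only finitely many nonzero terms).\<close>

definition conv :: "('g \<Rightarrow> 'g) \<Rightarrow> ('g \<Rightarrow> 'g \<Rightarrow> 'g) \<Rightarrow> ('g \<Rightarrow> 'g)
     \<Rightarrow> ('g \<Rightarrow> complex) \<Rightarrow> ('g \<Rightarrow> complex) \<Rightarrow> 'g \<Rightarrow> complex"
  where "conv r m i f1 f2 g = (\<Sum>h\<in>{h. r h = r g \<and> f1 h \<noteq> 0}. f1 h * f2 (m (i h) g))"

definition involution :: "('g \<Rightarrow> 'g) \<Rightarrow> ('g \<Rightarrow> complex) \<Rightarrow> 'g \<Rightarrow> complex"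
  where "involution i f g = cnj (f (i g))"

text \<open>State of C*(G), described through its (determining) restriction to the
dense *-subalgebra C_c(G): linear, positive, unital (the unit is the
indicator of the compact open unit space).\<close>

definition groupoid_state ::
  "'g::topological_space set \<Rightarrow> ('g \<Rightarrow> 'g) \<Rightarrow> ('g \<Rightarrow> 'g \<Rightarrow> 'g) \<Rightarrow> ('g \<Rightarrow> 'g)
     \<Rightarrow> (('g \<Rightarrow> complex) \<Rightarrow> complex) \<Rightarrow> bool"
  where "groupoid_state G0 r m i \<omega> \<longleftrightarrow>
     (\<forall>f\<in>Cc. \<forall>h\<in>Cc. \<omega> (\<lambda>g. f g + h g) = \<omega> f + \<omega> h) \<and>
     (\<forall>f\<in>Cc. \<forall>a. \<omega> (\<lambda>g. a * f g) = a * \<omega> f) \<and>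
     (\<forall>f\<in>Cc. Im (\<omega> (conv r m i (involution i f) f)) = 0 \<and>
              Re (\<omega> (conv r m i (involution i f) f)) \<ge> 0) \<and>
     \<omega> (\<lambda>g. if g \<in> G0 then 1 else 0) = 1"

definition gauge :: "('g \<Rightarrow> 'a) \<Rightarrow> ('a \<Rightarrow> complex) \<Rightarrow> ('g \<Rightarrow> complex) \<Rightarrow> 'g \<Rightarrow> complex"
  where "gauge \<Phi> \<xi> f g = \<xi> (\<Phi> g) * f g"

definition alpha_imag :: "('g \<Rightarrow> real) \<Rightarrow> real \<Rightarrow> ('g \<Rightarrow> complex) \<Rightarrow> 'g \<Rightarrow> complex"
  where "alpha_imag c \<beta> f g = complex_of_real (exp (- \<beta> * c g)) * f g"

definition KMS ::
  "('g \<Rightarrow> 'g) \<Rightarrow> ('g \<Rightarrow> 'g \<Rightarrow> 'g) \<Rightarrow> ('g \<Rightarrow> 'g) \<Rightarrow> ('g \<Rightarrow> real) \<Rightarrow> real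
     \<Rightarrow> (('g::topological_space \<Rightarrow> complex) \<Rightarrow> complex) \<Rightarrow> bool"
  where "KMS r m i c \<beta> \<omega> \<longleftrightarrow>
     (\<forall>f\<in>Cc. \<forall>h\<in>Cc. \<omega> (conv r m i f h) = \<omega> (conv r m i h (alpha_imag c \<beta> f)))"

definition cond_exp :: "'g set \<Rightarrow> ('g \<Rightarrow> complex) \<Rightarrow> 'g \<Rightarrow> complex"
  where "cond_exp G0 f g = (if g \<in> G0 then f g else 0)"

end

theory Submission
  imports Defs
begin

text \<open>Only linearity of \<open>\<omega>\<close> on \<open>C\<^sub>c(G)\<close> is used.

Cut \<open>f\<close> along the clopen fibres of \<open>\<Phi>\<close>; only finitely many meet its compact support.
For \<open>a \<noteq> 0\<close> there is a character \<open>\<xi>\<close> with \<open>\<xi> a \<noteq> 1\<close> (characters of a discrete abelian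
group separate points: partial characters extend by Zorn's lemma because the circle is
divisible), and gauge invariance gives \<open>\<omega> f\<^sub>a = \<xi> a * \<omega> f\<^sub>a\<close>, hence \<open>\<omega> f\<^sub>a = 0\<close>.
The remaining difference \<open>f\<^sub>0 - P f\<close> is supported in the closed set of non-unit arrows
in \<open>ker \<Phi>\<close>, where \<open>r \<noteq> s\<close> since \<open>ker \<Phi>\<close> meets the isotropy only in units.
A function \<open>h\<close> on the unit space is fixed by \<open>\<alpha>\<close> because \<open>c\<close> vanishes on units, so the
KMS condition gives \<open>\<omega> ((h \<circ> r - h \<circ> s) F) = 0\<close>. Functions \<open>h\<close> separating \<open>r g\<close> from
\<open>s g\<close>, glued by a partition of unity on the compact support, write \<open>f\<^sub>0 - P f\<close> as a
finite sum of such terms.\<close>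

section \<open>Integer multiples in abelian groups\<close>

fun nat_mult :: "nat \<Rightarrow> 'a::ab_group_add \<Rightarrow> 'a" where
  "nat_mult 0 x = 0"
| "nat_mult (Suc n) x = x + nat_mult n x"

lemma nat_mult_add: "nat_mult (k + n) x = nat_mult k x + nat_mult n x"
  by (induct k) (simp_all add: add.assoc)

lemma nat_mult_mult: "nat_mult (k * n) x = nat_mult k (nat_mult n x)"
proof (induct k)
  case (Suc k)
  have "nat_mult n (x + y) = nat_mult n x + nat_mult n y" for x y :: 'a
    by (induct n) (simp_all add: algebra_simps)
  with Suc show ?case by (simp add: nat_mult_add)
qed simp

lemma nat_mult_diff: "nat_mult n (x - y) = nat_mult n x - nat_mult n y"
  by (induct n) (simp_all add: algebra_simps)

definition int_mult :: "int \<Rightarrow> 'a::ab_group_add \<Rightarrow> 'a" where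
  "int_mult n x = (if 0 \<le> n then nat_mult (nat n) x else - nat_mult (nat (- n)) x)"

lemma int_mult_of_nat_diff: "int_mult (int a - int b) x = nat_mult a x - nat_mult b x"
proof (cases "b \<le> a")
  case True
  then obtain k where "a = b + k" using le_Suc_ex by blast
  then show ?thesis by (simp add: int_mult_def nat_mult_add)
next
  case False
  then obtain k where "b = a + Suc k" by (metis add_Suc_right less_imp_Suc_add not_le)
  then have "int a - int b = - int (Suc k)" by simp
  moreover have "nat (int k + 1) = Suc k" by simp
  ultimately show ?thesis using \<open>b = a + Suc k\<close> by (simp only: int_mult_def nat_mult_add) simp
qed

lemma int_mult_add: "int_mult (k + n) x = int_mult k x + int_mult n x"
proof -
  obtain a b c d where "k = int a - int b" "n = int c - int d"
    using int_diff_cases by metis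
  moreover have "int a - int b + (int c - int d) = int (a + c) - int (b + d)" by simp
  ultimately show ?thesis by (simp only: int_mult_of_nat_diff nat_mult_add) (simp add: algebra_simps)
qed

lemma int_mult_minus: "int_mult (- n) x = - int_mult n x"
  by (metis add.right_inverse add_eq_0_iff int_mult_add int_mult_of_nat_diff diff_self)

lemma int_mult_mult: "int_mult (k * n) x = int_mult k (int_mult n x)"
proof -
  obtain a b c d where kn: "k = int a - int b" "n = int c - int d"
    using int_diff_cases by metis
  have "k * n = int (a * c + b * d) - int (a * d + b * c)" unfolding kn by (simp add: algebra_simps)
  with kn show ?thesis
    by (simp only: int_mult_of_nat_diff nat_mult_add nat_mult_diff nat_mult_mult) (simp add: algebra_simps)
qed

lemma int_mult_0 [simp]: "int_mult 0 x = 0"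
  and int_mult_1 [simp]: "int_mult 1 x = x"
  by (simp_all add: int_mult_def)

lemma int_additive_subgroup_eq_multiples:
  fixes S :: "int set"
  assumes "0 \<in> S" and add: "\<And>m n. m \<in> S \<Longrightarrow> n \<in> S \<Longrightarrow> m + n \<in> S"
    and minus: "\<And>n. n \<in> S \<Longrightarrow> - n \<in> S"
  obtains d where "d \<ge> 0" "S = {n. d dvd n}"
proof -
  have nat_times: "int k * n \<in> S" if "n \<in> S" for k n
    by (induct k) (auto simp: \<open>0 \<in> S\<close> add that algebra_simps)
  have times: "k * n \<in> S" if "n \<in> S" for k n
    using nat_times[OF that, of "nat k"] minus[OF nat_times[OF that, of "nat (- k)"]]
    by (cases "k \<ge> 0") simp_all
  show ?thesis
  proof (cases "S \<subseteq> {0}")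
    case True
    then show ?thesis using \<open>0 \<in> S\<close> by (intro that[of 0]) auto
  next
    case False
    then obtain n where "n \<in> S" "n \<noteq> 0" by auto
    then have "\<exists>k::nat. k > 0 \<and> int k \<in> S"
      using minus[of n] by (intro exI[of _ "nat \<bar>n\<bar>"]) (simp add: abs_if)
    define d where "d = (LEAST k::nat. k > 0 \<and> int k \<in> S)"
    have d: "d > 0" "int d \<in> S"
      using LeastI_ex[OF \<open>\<exists>k. _\<close>] unfolding d_def by auto
    have least: "d \<le> k" if "0 < k" "int k \<in> S" for k
      unfolding d_def using that by (simp add: Least_le)
    have "S = {n. int d dvd n}"
    proof (intro set_eqI iffI)
      fix x assume "x \<in> S"
      have "x mod int d = x + (- (x div int d)) * int d" by (simp add: minus_div_mult_eq_mod [symmetric])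
      also have "\<dots> \<in> S" by (rule add[OF \<open>x \<in> S\<close> times[OF d(2)]])
      finally have "int (nat (x mod int d)) \<in> S" using d(1) by simp
      moreover have "nat (x mod int d) < d" using d(1) by (simp add: nat_less_iff)
      ultimately have "\<not> 0 < nat (x mod int d)" using least[of "nat (x mod int d)"] by linarith
      moreover have "0 \<le> x mod int d" using d(1) by simp
      ultimately have "x mod int d = 0" by linarith
      then show "x \<in> {n. int d dvd n}" by auto
    qed (auto elim!: dvdE simp: mult.commute intro: times[OF d(2)])
    then show ?thesis by (intro that[of "int d"]) auto
  qed
qed

section \<open>Characters of a discrete abelian group separate points\<close>

text \<open>A partial character is the graph of a circle-valued homomorphism defined on the
subgroup \<open>Domain R\<close>.\<close>

definition partial_character :: "('a::ab_group_add \<times> complex) set \<Rightarrow> bool" where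
  "partial_character R \<longleftrightarrow> single_valued R \<and> (0, 1) \<in> R \<and>
     (\<forall>x z y w. (x, z) \<in> R \<longrightarrow> (y, w) \<in> R \<longrightarrow> (x + y, z * w) \<in> R) \<and>
     (\<forall>x z. (x, z) \<in> R \<longrightarrow> norm z = 1 \<and> - x \<in> Domain R)"

context
  fixes R :: "('a::ab_group_add \<times> complex) set"
  assumes R: "partial_character R"
begin

lemma partial_character_unique: "(x, z) \<in> R \<Longrightarrow> (x, z') \<in> R \<Longrightarrow> z = z'"
  using R unfolding partial_character_def single_valued_def by blast

lemma partial_character_zero: "(0, 1) \<in> R"
  and partial_character_add: "(x, z) \<in> R \<Longrightarrow> (y, w) \<in> R \<Longrightarrow> (x + y, z * w) \<in> R"
  and partial_character_norm: "(x, z) \<in> R \<Longrightarrow> norm z = 1"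
  and partial_character_Domain_minus: "(x, z) \<in> R \<Longrightarrow> - x \<in> Domain R"
  using R unfolding partial_character_def by blast+

lemma partial_character_minus:
  assumes xz: "(x, z) \<in> R" shows "(- x, inverse z) \<in> R"
proof -
  obtain w where w: "(- x, w) \<in> R" using partial_character_Domain_minus[OF xz] by blast
  have "(x + - x, z * w) \<in> R" by (rule partial_character_add[OF xz w])
  then have "z * w = 1" using partial_character_unique partial_character_zero by simp
  then have "w = inverse z" by (simp add: inverse_unique)
  with w show ?thesis by simp
qed

lemma partial_character_int_mult:
  assumes xz: "(x, z) \<in> R" shows "(int_mult n x, z powi n) \<in> R"
proof -
  have nat: "(nat_mult k x, z ^ k) \<in> R" for k
    by (induct k) (simp_all add: partial_character_zero partial_character_add[OF xz])
  show ?thesis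
  proof (cases "0 \<le> n")
    case True
    with nat[of "nat n"] show ?thesis by (simp add: int_mult_def power_int_def)
  next
    case False
    with partial_character_minus[OF nat[of "nat (- n)"]] show ?thesis
      by (simp add: int_mult_def power_int_def power_inverse)
  qed
qed

lemma partial_character_Domain_subgroup:
  "0 \<in> Domain R" "x \<in> Domain R \<Longrightarrow> y \<in> Domain R \<Longrightarrow> x + y \<in> Domain R"
  "x \<in> Domain R \<Longrightarrow> - x \<in> Domain R"
  using partial_character_zero partial_character_add partial_character_Domain_minus by blast+

lemma partial_character_extend:
  assumes z: "norm z = 1"
    and compatible: "\<And>n. int_mult n b \<in> Domain R \<Longrightarrow> (int_mult n b, z powi n) \<in> R"
  obtains R' where "partial_character R'" "R \<subseteq> R'" "(b, z) \<in> R'"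
proof -
  define R' where "R' = {(h + int_mult n b, w * z powi n) | h w n. (h, w) \<in> R}"
  have R'I: "(h + int_mult n b, w * z powi n) \<in> R'" if "(h, w) \<in> R" for h w n
    unfolding R'_def using that by blast
  have R'E: "\<exists>h w n. x = h + int_mult n b \<and> u = w * z powi n \<and> (h, w) \<in> R" if "(x, u) \<in> R'" for x u
    using that unfolding R'_def by blast
  have z0: "z \<noteq> 0" using z by auto
  have unique: "w * z powi n = w' * z powi n'"
    if hw: "(h, w) \<in> R" and hw': "(h', w') \<in> R" and eq: "h + int_mult n b = h' + int_mult n' b"
    for h w n h' w' n'
  proof -
    have "h + int_mult n' b + int_mult (n - n') b = h' + int_mult n' b"
      using eq int_mult_add[of n' "n - n'" b] by (simp add: add.assoc)
    then have e: "int_mult (n - n') b = h' - h" by (simp add: algebra_simps)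
    have m: "(h' - h, w' * inverse w) \<in> R"
      using partial_character_add[OF hw' partial_character_minus[OF hw]] by simp
    then have "int_mult (n - n') b \<in> Domain R" unfolding e by blast
    from compatible[OF this] have "(h' - h, z powi (n - n')) \<in> R" unfolding e .
    with m have "w' * inverse w = z powi (n - n')" by (rule partial_character_unique)
    moreover have "w \<noteq> 0" using partial_character_norm[OF hw] by auto
    ultimately show ?thesis using z0 by (simp add: power_int_diff field_simps)
  qed
  have "partial_character R'"
    unfolding partial_character_def
  proof (intro conjI allI impI)
    show "single_valued R'"
    proof (rule single_valuedI)
      fix x u u' assume "(x, u) \<in> R'" "(x, u') \<in> R'"
      from R'E[OF this(1)] R'E[OF this(2)] obtain h w n h' w' n' where
        xu: "x = h + int_mult n b" "u = w * z powi n" "(h, w) \<in> R" and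
        xu': "x = h' + int_mult n' b" "u' = w' * z powi n'" "(h', w') \<in> R"
        by blast
      have "h + int_mult n b = h' + int_mult n' b" using xu(1) xu'(1) by simp
      with xu(2) xu'(2) show "u = u'" using unique[OF xu(3) xu'(3)] by simp
    qed
    show "(0, 1) \<in> R'" using R'I[OF partial_character_zero, of 0] by simp
  next
    fix x u y v assume "(x, u) \<in> R'" "(y, v) \<in> R'"
    from R'E[OF this(1)] R'E[OF this(2)] obtain h w n h' w' n' where
      xu: "x = h + int_mult n b" "u = w * z powi n" "(h, w) \<in> R" and
      yv: "y = h' + int_mult n' b" "v = w' * z powi n'" "(h', w') \<in> R"
      by blast
    have "(h + h' + int_mult (n + n') b, w * w' * z powi (n + n')) \<in> R'"
      by (rule R'I[OF partial_character_add[OF xu(3) yv(3)]])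
    then show "(x + y, u * v) \<in> R'"
      using xu yv z0 by (simp add: int_mult_add power_int_add algebra_simps)
  next
    fix x u assume "(x, u) \<in> R'"
    from R'E[OF this] obtain h w n where hw: "x = h + int_mult n b" "u = w * z powi n" "(h, w) \<in> R"
      by blast
    then show "norm u = 1"
      using partial_character_norm z by (simp add: norm_mult norm_power_int)
    have "(- h + int_mult (- n) b, inverse w * z powi (- n)) \<in> R'"
      by (rule R'I[OF partial_character_minus[OF hw(3)]])
    moreover have "- h + int_mult (- n) b = - x" using hw(1) by (simp add: int_mult_minus)
    ultimately show "- x \<in> Domain R'" by (metis Domain.DomainI)
  qed
  moreover have "R \<subseteq> R'" using R'I[of _ _ 0] by auto
  moreover have "(b, z) \<in> R'" using R'I[OF partial_character_zero, of 1] by simp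
  ultimately show thesis by (rule that)
qed

lemma partial_character_compatible_value:
  obtains z where "norm z = 1" "\<And>n. int_mult n b \<in> Domain R \<Longrightarrow> (int_mult n b, z powi n) \<in> R"
proof -
  obtain d where d: "d \<ge> 0" "{n. int_mult n b \<in> Domain R} = {n. d dvd n}"
    by (rule int_additive_subgroup_eq_multiples[of "{n. int_mult n b \<in> Domain R}"])
      (auto simp: int_mult_add int_mult_minus partial_character_Domain_subgroup)
  then have "int_mult d b \<in> Domain R" by auto
  then obtain w where w: "(int_mult d b, w) \<in> R" by blast
  obtain z where z: "norm z = 1" "z powi d = w"
  proof (cases "d = 0")
    case True
    then have "w = 1" using w partial_character_unique partial_character_zero by simp
    with True show thesis by (intro that[of 1]) simp_all
  next
    case False
    define e where "e = nat d"
    define z where "z = cis (Arg w / real e)"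
    have "z ^ e = cis (real e * (Arg w / real e))" unfolding z_def by (rule Complex.DeMoivre)
    also have "\<dots> = cis (Arg w)" using False d(1) by (simp add: e_def)
    also have "\<dots> = w"
      using partial_character_norm[OF w] cis_Arg[of w] by (cases "w = 0") (auto simp: sgn_div_norm)
    finally show thesis using d(1) by (intro that[of z]) (simp_all add: z_def e_def power_int_def)
  qed
  show thesis
  proof (rule that[OF z(1)])
    fix n assume "int_mult n b \<in> Domain R"
    then have "d dvd n" using d(2) by blast
    then obtain k where nk: "n = k * d" by (metis dvd_def mult.commute)
    have "int_mult n b = int_mult k (int_mult d b)" unfolding nk by (rule int_mult_mult)
    moreover have "z powi n = w powi k" by (simp only: nk mult.commute[of k d] power_int_mult z(2))
    ultimately show "(int_mult n b, z powi n) \<in> R" using partial_character_int_mult[OF w] by simp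
  qed
qed

end

lemma partial_character_Union_chain:
  assumes "C \<noteq> {}" and pc: "\<And>R. R \<in> C \<Longrightarrow> partial_character R" and "chain\<^sub>\<subseteq> C"
  shows "partial_character (\<Union>C)"
proof -
  have common: "\<exists>R\<in>C. p \<in> R \<and> q \<in> R" if pq: "p \<in> \<Union>C" "q \<in> \<Union>C" for p q
  proof -
    obtain R R' where "R \<in> C" "p \<in> R" "R' \<in> C" "q \<in> R'" using pq by blast
    then show ?thesis using \<open>chain\<^sub>\<subseteq> C\<close> unfolding chain_subset_def by blast
  qed
  show ?thesis
    unfolding partial_character_def single_valued_def
  proof (intro conjI allI impI)
    fix x z z' assume "(x, z) \<in> \<Union>C" "(x, z') \<in> \<Union>C"
    then obtain R where "R \<in> C" "(x, z) \<in> R" "(x, z') \<in> R" using common by blast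
    then show "z = z'" using partial_character_unique[OF pc] by blast
  next
    fix x z y w assume "(x, z) \<in> \<Union>C" "(y, w) \<in> \<Union>C"
    then obtain R where R: "R \<in> C" "(x, z) \<in> R" "(y, w) \<in> R" using common by blast
    then have "(x + y, z * w) \<in> R" using partial_character_add[OF pc] by blast
    with R(1) show "(x + y, z * w) \<in> \<Union>C" by blast
  next
    fix x z assume "(x, z) \<in> \<Union>C"
    then obtain R where R: "R \<in> C" "(x, z) \<in> R" by blast
    show "norm z = 1" using partial_character_norm[OF pc[OF R(1)] R(2)] .
    have "- x \<in> Domain R" using partial_character_Domain_minus[OF pc[OF R(1)] R(2)] .
    with R(1) show "- x \<in> Domain (\<Union>C)" by blast
  next
    obtain R where "R \<in> C" using \<open>C \<noteq> {}\<close> by blast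
    with partial_character_zero[OF pc] show "(0, 1) \<in> \<Union>C" by blast
  qed
qed

text \<open>Zorn's lemma, using divisibility of the circle group in each extension step.\<close>

lemma partial_character_extends_to_total:
  assumes "partial_character R"
  obtains M where "partial_character M" "R \<subseteq> M" "Domain M = UNIV"
proof -
  define \<A> where "\<A> = {X. partial_character X \<and> R \<subseteq> X}"
  have "\<exists>M\<in>\<A>. \<forall>X\<in>\<A>. M \<subseteq> X \<longrightarrow> X = M"
  proof (rule Zorn_Lemma2, intro ballI)
    fix C assume C: "C \<in> chains \<A>"
    show "\<exists>U\<in>\<A>. \<forall>X\<in>C. X \<subseteq> U"
    proof (cases "C = {}")
      case True
      then show ?thesis using assms unfolding \<A>_def by blast
    next
      case False
      have C\<A>: "C \<subseteq> \<A>" "chain\<^sub>\<subseteq> C" using C unfolding chains_def by auto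
      then have "partial_character (\<Union>C)"
        by (intro partial_character_Union_chain[OF False]) (auto simp: \<A>_def)
      moreover obtain X where "X \<in> C" using False by blast
      then have "R \<subseteq> \<Union>C" using C\<A>(1) unfolding \<A>_def by blast
      ultimately show ?thesis unfolding \<A>_def by (intro bexI[of _ "\<Union>C"]) auto
    qed
  qed
  then obtain M where "M \<in> \<A>" and max: "\<forall>X\<in>\<A>. M \<subseteq> X \<longrightarrow> X = M" by blast
  then have M: "partial_character M" "R \<subseteq> M" unfolding \<A>_def by auto
  have "x \<in> Domain M" for x
  proof -
    obtain z where z: "norm z = 1" "\<And>n. int_mult n x \<in> Domain M \<Longrightarrow> (int_mult n x, z powi n) \<in> M"
      using partial_character_compatible_value[OF M(1), of x] by blast
    obtain X where X: "partial_character X" "M \<subseteq> X" "(x, z) \<in> X"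
      by (rule partial_character_extend[OF M(1) z(1) z(2)])
    then have "X \<in> \<A>" using M(2) unfolding \<A>_def by auto
    with max X(2) have "X = M" by blast
    with X(3) show ?thesis by blast
  qed
  with M show thesis by (intro that) auto
qed

lemma exists_root_of_unity_ne_1:
  fixes a :: "'a::ab_group_add"
  assumes "a \<noteq> 0"
  obtains z :: complex where "norm z = 1" "z \<noteq> 1" "\<And>n. int_mult n a = 0 \<Longrightarrow> z powi n = 1"
proof -
  obtain d where d: "d \<ge> 0" "{n. int_mult n a = 0} = {n. d dvd n}"
    by (rule int_additive_subgroup_eq_multiples[of "{n. int_mult n a = 0}"])
      (auto simp: int_mult_add int_mult_minus)
  have "d \<noteq> 1"
  proof
    assume "d = 1"
    then have "1 \<in> {n. int_mult n a = 0}" unfolding d(2) by simp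
    with \<open>a \<noteq> 0\<close> show False by simp
  qed
  have dvd: "d dvd n" if "int_mult n a = 0" for n
    using that d(2) by blast
  show thesis
  proof (cases "d = 0")
    case True
    show thesis
    proof (rule that[of "- 1"])
      fix n assume "int_mult n a = 0"
      then have "n = 0" using dvd True by simp
      then show "(- 1 :: complex) powi n = 1" by simp
    qed simp_all
  next
    case False
    define e where "e = nat d"
    have e: "e \<ge> 2" "int e = d" using False \<open>d \<noteq> 1\<close> d(1) unfolding e_def by auto
    define z :: complex where "z = exp (2 * of_real pi * \<i> * of_nat 1 / of_nat e)"
    have "z ^ e = 1" unfolding z_def by (rule complex_root_unity) (use e in auto)
    then have zd: "z powi d = 1" using e(2)[symmetric] by simp
    show thesis
    proof (rule that)
      show "norm z = 1" unfolding z_def by (simp add: norm_exp_eq_Re)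
      show "z \<noteq> 1" unfolding z_def using complex_root_unity_eq_1[of e 1] e(1) by auto
      fix n assume "int_mult n a = 0"
      then obtain k where "n = d * k" using dvd by (blast elim: dvdE)
      then show "z powi n = 1" by (simp add: power_int_mult zd)
    qed
  qed
qed

theorem exists_character_ne_1:
  fixes a :: "'a::ab_group_add"
  assumes "a \<noteq> 0"
  obtains \<xi> where "character \<xi>" "\<xi> a \<noteq> 1"
proof -
  obtain z :: complex where z: "norm z = 1" "z \<noteq> 1" "\<And>n. int_mult n a = 0 \<Longrightarrow> z powi n = 1"
    using exists_root_of_unity_ne_1[OF assms] by blast
  have "partial_character {(0 :: 'a, 1 :: complex)}"
    unfolding partial_character_def single_valued_def by simp
  then obtain R where R: "partial_character R" "(a, z) \<in> R"
    by (rule partial_character_extend[OF _ z(1)]) (use z(3) in auto)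
  obtain M where M: "partial_character M" "R \<subseteq> M" "Domain M = UNIV"
    by (rule partial_character_extends_to_total[OF R(1)])
  define \<xi> where "\<xi> x = (THE w. (x, w) \<in> M)" for x
  have graph: "(x, \<xi> x) \<in> M" for x
  proof -
    obtain w where w: "(x, w) \<in> M" using M(3) by blast
    show ?thesis
      unfolding \<xi>_def
      by (rule theI[where P = "\<lambda>w. (x, w) \<in> M", OF w partial_character_unique[OF M(1) _ w]])
  qed
  have \<xi>: "w = \<xi> x" if "(x, w) \<in> M" for x w
    using partial_character_unique[OF M(1) that graph] .
  have "character \<xi>"
    unfolding character_def
    using \<xi>[OF partial_character_add[OF M(1) graph graph]] partial_character_norm[OF M(1) graph]
    by simp
  moreover have "\<xi> a \<noteq> 1" using \<xi> M(2) R(2) z(2) by blast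
  ultimately show thesis by (rule that)
qed

section \<open>Compactly supported functions and linear functionals on them\<close>

lemma continuous_on_clopen_extend_zero:
  assumes "open U" "closed U" "continuous_on U f"
  shows "continuous_on UNIV (\<lambda>x. if x \<in> U then f x else (0 :: 'b :: {zero, topological_space}))"
proof -
  have "continuous_on (U \<union> - U) (\<lambda>x. if x \<in> U then f x else 0)"
    using assms by (intro continuous_on_cases) (auto intro: continuous_on_const)
  then show ?thesis by simp
qed

lemma compact_closure_subset:
  assumes "compact (closure B)" "A \<subseteq> B"
  shows "compact (closure A)"
  using closed_Int_compact[OF closed_closure assms(1), of A] closure_mono[OF assms(2)]
  by (simp add: Int_absorb2)

lemma Cc_compact_support: "f \<in> Cc \<Longrightarrow> compact (closure {g. f g \<noteq> 0})"
  unfolding Cc_def by simp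

lemma Cc_zero: "(\<lambda>g. 0) \<in> Cc"
  unfolding Cc_def by simp

lemma Cc_add:
  assumes "f \<in> Cc" "h \<in> Cc"
  shows "(\<lambda>g. f g + h g) \<in> Cc"
proof -
  have "compact (closure ({g. f g \<noteq> 0} \<union> {g. h g \<noteq> 0}))"
    using assms by (simp add: Cc_def closure_Un compact_Un)
  then have "compact (closure {g. f g + h g \<noteq> 0})"
    by (rule compact_closure_subset) auto
  with assms show ?thesis
    unfolding Cc_def by (auto intro: continuous_intros)
qed

lemma Cc_mult_left:
  assumes "continuous_on UNIV \<phi>" "f \<in> Cc"
  shows "(\<lambda>g. \<phi> g * f g) \<in> Cc"
  using assms unfolding Cc_def
  by (auto intro: continuous_intros compact_closure_subset)

lemma Cc_scaleC: "f \<in> Cc \<Longrightarrow> (\<lambda>g. a * f g) \<in> Cc"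
  by (rule Cc_mult_left[OF continuous_on_const])

lemma Cc_diff: "f \<in> Cc \<Longrightarrow> h \<in> Cc \<Longrightarrow> (\<lambda>g. f g - h g) \<in> Cc"
  using Cc_add[OF _ Cc_scaleC, of f h "- 1"] by simp

lemma Cc_restrict_clopen:
  assumes "open U" "closed U" "f \<in> Cc"
  shows "(\<lambda>g. if g \<in> U then f g else 0) \<in> Cc"
  using assms continuous_on_clopen_extend_zero[OF assms(1,2) continuous_on_subset]
  unfolding Cc_def by (auto intro: compact_closure_subset)

lemma Cc_sum: "finite T \<Longrightarrow> (\<And>t. t \<in> T \<Longrightarrow> \<phi> t \<in> Cc) \<Longrightarrow> (\<lambda>g. \<Sum>t\<in>T. \<phi> t g) \<in> Cc"
  by (induct T rule: finite_induct) (simp_all add: Cc_zero Cc_add)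

definition Cc_linear :: "(('g::topological_space \<Rightarrow> complex) \<Rightarrow> complex) \<Rightarrow> bool" where
  "Cc_linear \<omega> \<longleftrightarrow>
     (\<forall>f\<in>Cc. \<forall>h\<in>Cc. \<omega> (\<lambda>g. f g + h g) = \<omega> f + \<omega> h) \<and> (\<forall>f\<in>Cc. \<forall>a. \<omega> (\<lambda>g. a * f g) = a * \<omega> f)"

lemma groupoid_state_imp_Cc_linear: "groupoid_state G0 r m i \<omega> \<Longrightarrow> Cc_linear \<omega>"
  unfolding groupoid_state_def Cc_linear_def by blast

context
  fixes \<omega> :: "('g::topological_space \<Rightarrow> complex) \<Rightarrow> complex"
  assumes \<omega>: "Cc_linear \<omega>"
begin

lemma Cc_linear_add: "f \<in> Cc \<Longrightarrow> h \<in> Cc \<Longrightarrow> \<omega> (\<lambda>g. f g + h g) = \<omega> f + \<omega> h"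
  and Cc_linear_scaleC: "f \<in> Cc \<Longrightarrow> \<omega> (\<lambda>g. a * f g) = a * \<omega> f"
  using \<omega> unfolding Cc_linear_def by blast+

lemma Cc_linear_zero: "\<omega> (\<lambda>g. 0) = 0"
  using Cc_linear_scaleC[OF Cc_zero, of 0] by simp

lemma Cc_linear_diff:
  assumes "f \<in> Cc" "h \<in> Cc"
  shows "\<omega> (\<lambda>g. f g - h g) = \<omega> f - \<omega> h"
  using Cc_linear_add[OF assms(1) Cc_scaleC[OF assms(2)], of "- 1"] Cc_linear_scaleC[OF assms(2), of "- 1"]
  by simp

lemma Cc_linear_sum:
  "finite T \<Longrightarrow> (\<And>t. t \<in> T \<Longrightarrow> \<phi> t \<in> Cc) \<Longrightarrow> \<omega> (\<lambda>g. \<Sum>t\<in>T. \<phi> t g) = (\<Sum>t\<in>T. \<omega> (\<phi> t))"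
proof (induct T rule: finite_induct)
  case (insert t T)
  then show ?case using Cc_linear_add[OF _ Cc_sum[of T \<phi>]] by simp
qed (simp add: Cc_linear_zero)

end

section \<open>Etale groupoids\<close>

lemma cocycle_vanishes_on_units:
  fixes \<phi> :: "'g \<Rightarrow> 'a::ab_group_add"
  assumes "groupoid G0 r s m i" and cocycle: "\<And>g h. s g = r h \<Longrightarrow> \<phi> (m g h) = \<phi> g + \<phi> h"
    and "u \<in> G0"
  shows "\<phi> u = 0"
proof -
  have "s u = r u" "m u u = u"
    using assms(1,3) unfolding groupoid_def by (metis, metis)
  then show ?thesis using cocycle[of u u] by simp
qed

locale etale_gpd =
  fixes G0 :: "'g::{t2_space,second_countable_topology} set"
    and r s :: "'g \<Rightarrow> 'g" and m :: "'g \<Rightarrow> 'g \<Rightarrow> 'g" and i :: "'g \<Rightarrow> 'g"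
  assumes etale: "etale_groupoid G0 r s m i"
begin

lemma groupoid: "groupoid G0 r s m i"
  using etale unfolding etale_groupoid_def by simp

lemma r_in_G0: "r g \<in> G0" and s_in_G0: "s g \<in> G0"
  and r_unit: "u \<in> G0 \<Longrightarrow> r u = u" and s_unit: "u \<in> G0 \<Longrightarrow> s u = u"
  and r_mult: "s g = r h \<Longrightarrow> r (m g h) = r g"
  and mult_assoc: "s g = r h \<Longrightarrow> s h = r k \<Longrightarrow> m (m g h) k = m g (m h k)"
  and mult_r_left: "m (r g) g = g" and mult_s_right: "m g (s g) = g"
  and s_inv: "s (i g) = r g" and r_inv: "r (i g) = s g"
  and mult_inv_right: "m g (i g) = r g" and mult_inv_left: "m (i g) g = s g"
  using groupoid unfolding groupoid_def by blast+

lemma inv_unit: "u \<in> G0 \<Longrightarrow> i u = u"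
  by (metis mult_inv_right mult_r_left r_inv r_unit s_unit)

lemma continuous_r: "continuous_on UNIV r" and continuous_s: "continuous_on UNIV s"
  and compact_G0: "compact G0"
  using etale unfolding etale_groupoid_def by blast+

lemma local_homeomorphism_r:
  obtains U where "\<And>g. open (U g)" "\<And>g. g \<in> U g" "\<And>g. open (r ` U g)" "\<And>g. inj_on r (U g)"
proof -
  have "\<forall>g. \<exists>U. open U \<and> g \<in> U \<and> open (r ` U) \<and> inj_on r U"
    using etale unfolding etale_groupoid_def by blast
  then show thesis using that by (auto dest!: choice)
qed

lemma closed_G0: "closed G0"
  using compact_G0 by (rule compact_imp_closed)

lemma open_G0: "open G0"
proof -
  obtain U where U: "\<And>g. open (U g)" "\<And>g. g \<in> U g" "\<And>g. open (r ` U g)" "\<And>g. inj_on r (U g)"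
    by (rule local_homeomorphism_r) (rule that)
  have "G0 = range r"
  proof (intro subset_antisym subsetI)
    fix u assume "u \<in> G0"
    then show "u \<in> range r" using r_unit[of u] by (metis rangeI)
  qed (auto simp: r_in_G0)
  also have "\<dots> = (\<Union>g. r ` U g)" using U(2) by blast
  finally show ?thesis using U(3) by auto
qed

lemma eq_if_mult_inv_in_G0:
  assumes "r h = r g" "m (i h) g \<in> G0"
  shows "h = g"
proof -
  define u where "u = m (i h) g"
  have "r u = s h" unfolding u_def using r_mult[of "i h" g] assms(1) s_inv r_inv by simp
  then have "u = s h" using assms(2) r_unit unfolding u_def by metis
  have "g = m (m h (i h)) g" using assms(1) mult_inv_right mult_r_left by simp
  also have "\<dots> = m h u" unfolding u_def by (rule mult_assoc) (simp_all add: s_inv r_inv assms(1))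
  also have "\<dots> = h" using \<open>u = s h\<close> mult_s_right by simp
  finally show ?thesis by simp
qed

lemma finite_r_fibre_support:
  assumes "F \<in> Cc"
  shows "finite {h. r h = x \<and> F h \<noteq> 0}"
proof -
  define K where "K = {h. r h = x} \<inter> closure {g. F g \<noteq> 0}"
  have "closed {h. r h = x}" by (rule closed_Collect_eq[OF continuous_r continuous_on_const])
  then have "compact K" unfolding K_def using Cc_compact_support[OF assms] by (rule closed_Int_compact)
  obtain U where U: "\<And>h. open (U h)" "\<And>h. h \<in> U h" "\<And>h. open (r ` U h)" "\<And>h. inj_on r (U h)"
    by (rule local_homeomorphism_r) (rule that)
  obtain C where C: "C \<subseteq> K" "finite C" "K \<subseteq> (\<Union>c\<in>C. U c)"
    by (rule compactE_image[OF \<open>compact K\<close>, of K U]) (use U(1,2) in auto)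
  \<comment> \<open>each neighbourhood \<open>U c\<close> meets the fibre of \<open>r\<close> over \<open>x\<close> only in \<open>c\<close>\<close>
  have "K \<subseteq> C"
  proof
    fix h assume "h \<in> K"
    then obtain c where c: "c \<in> C" "h \<in> U c" using C(3) by blast
    have "r h = x" "r c = x" using \<open>h \<in> K\<close> c(1) C(1) unfolding K_def by auto
    then have "h = c" using inj_onD[OF U(4)[of c] _ c(2) U(2)[of c]] by simp
    with c(1) show "h \<in> C" by simp
  qed
  moreover have "{h. r h = x \<and> F h \<noteq> 0} \<subseteq> K"
    unfolding K_def using closure_subset[of "{g. F g \<noteq> 0}"] by auto
  ultimately show ?thesis using C(2) by (meson finite_subset subset_trans)
qed

lemma conv_unit_left:
  assumes "\<And>g. g \<notin> G0 \<Longrightarrow> H g = 0"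
  shows "conv r m i H F g = H (r g) * F g"
proof -
  have "h = r g" if "r h = r g" "H h \<noteq> 0" for h
    using that assms r_unit by metis
  then have "{h. r h = r g \<and> H h \<noteq> 0} = {r g} \<inter> {h. H h \<noteq> 0}"
    using r_unit[OF r_in_G0] by auto
  moreover have "m (i (r g)) g = g" using inv_unit[OF r_in_G0] mult_r_left by simp
  ultimately show ?thesis unfolding conv_def by (cases "H (r g) = 0") simp_all
qed

lemma conv_unit_right:
  assumes F: "F \<in> Cc" and H: "\<And>g. g \<notin> G0 \<Longrightarrow> H g = 0"
  shows "conv r m i F H g = F g * H (s g)"
proof -
  define S where "S = {h. r h = r g \<and> F h \<noteq> 0}"
  have "finite S" unfolding S_def by (rule finite_r_fibre_support[OF F])
  have "F h * H (m (i h) g) = 0" if "h \<in> S" "h \<noteq> g" for h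
    using eq_if_mult_inv_in_G0[of h g] that H unfolding S_def by auto
  then have "conv r m i F H g = (\<Sum>h\<in>S \<inter> {g}. F h * H (m (i h) g))"
    unfolding conv_def S_def[symmetric] using \<open>finite S\<close> by (intro sum.mono_neutral_right) auto
  also have "\<dots> = F g * H (s g)"
    by (cases "g \<in> S") (auto simp: S_def mult_inv_left)
  finally show ?thesis .
qed

end

section \<open>Separating functions and partitions of unity\<close>

lemma compact_Hausdorff_separating_function:
  fixes S :: "'a::t2_space set"
  assumes "compact S" "x \<in> S" "y \<in> S" "x \<noteq> y"
  obtains h :: "'a \<Rightarrow> real" where "continuous_on S h" "h x \<noteq> h y"
proof -
  have "Hausdorff_space (top_of_set S)"
    by (rule Hausdorff_space_subtopology) (simp add: Hausdorff_space_def disjnt_def separation_t2)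
  then have "normal_space (top_of_set S)"
    using assms(1) by (intro compact_Hausdorff_or_regular_imp_normal_space) (simp_all add: compact_space_subtopology)
  moreover have "closedin (top_of_set S) {x}" "closedin (top_of_set S) {y}"
    using assms(2,3) by (simp_all add: closedin_closed) blast+
  ultimately obtain h where "continuous_map (top_of_set S) euclideanreal h" "h ` {x} \<subseteq> {0}" "h ` {y} \<subseteq> {1}"
    using Urysohn_lemma_alt[of "top_of_set S" "{x}" "{y}" 0 1] assms(4) by auto
  then show thesis by (intro that[of h]) auto
qed

lemma compact_partition_of_unity_by_products:
  fixes d :: "'a::topological_space \<Rightarrow> 'a \<Rightarrow> real"
  assumes K: "compact K" and d: "\<And>t. t \<in> K \<Longrightarrow> continuous_on UNIV (d t)"
    and diag: "\<And>x. x \<in> K \<Longrightarrow> d x x \<noteq> 0"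
  obtains T e where "finite T" "T \<subseteq> K" "\<And>t. t \<in> T \<Longrightarrow> continuous_on UNIV (e t)"
    "\<And>x. x \<in> K \<Longrightarrow> (\<Sum>t\<in>T. d t x * e t x) = 1"
proof -
  have "open {x. d t x \<noteq> 0}" if "t \<in> K" for t
    using open_Collect_neq[OF d[OF that] continuous_on_const] .
  then obtain T where T: "T \<subseteq> K" "finite T" "K \<subseteq> (\<Union>t\<in>T. {x. d t x \<noteq> 0})"
    by (rule compactE_image[OF K, of K "\<lambda>t. {x. d t x \<noteq> 0}"]) (use diag in auto)
  define D where "D x = (\<Sum>t\<in>T. (d t x)\<^sup>2)" for x
  have D: "continuous_on UNIV D"
    unfolding D_def using d T(1) by (intro continuous_intros) auto
  have D_pos: "D x > 0" if x: "x \<in> K" for x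
  proof -
    obtain t where "t \<in> T" "d t x \<noteq> 0" using T(3) x by blast
    then show ?thesis unfolding D_def by (intro sum_pos2[OF T(2)]) auto
  qed
  \<comment> \<open>so that \<open>max (D x) \<delta>\<close> agrees with \<open>D\<close> on \<open>K\<close> and never vanishes\<close>
  obtain \<delta> where \<delta>: "\<delta> > 0" "\<And>x. x \<in> K \<Longrightarrow> \<delta> \<le> D x"
  proof (cases "K = {}")
    case False
    obtain x0 where "x0 \<in> K" "\<forall>y\<in>K. D x0 \<le> D y"
      using continuous_attains_inf[OF K False continuous_on_subset[OF D]] by auto
    then show thesis using D_pos by (intro that[of "D x0"]) auto
  qed (rule that[of 1]; simp)
  define e where "e t x = d t x / max (D x) \<delta>" for t x
  show thesis
  proof (rule that[of T e])
    show "continuous_on UNIV (e t)" if "t \<in> T" for t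
      unfolding e_def using d that T(1) D \<delta>(1)
      by (intro continuous_intros) (auto simp: max_def)
    show "(\<Sum>t\<in>T. d t x * e t x) = 1" if "x \<in> K" for x
    proof -
      have "max (D x) \<delta> = D x" using \<delta>(2)[OF that] by simp
      then have "(\<Sum>t\<in>T. d t x * e t x) = (\<Sum>t\<in>T. (d t x)\<^sup>2) / D x"
        unfolding e_def by (simp add: sum_divide_distrib power2_eq_square)
      also have "\<dots> = 1" using D_pos[OF that] unfolding D_def by simp
      finally show ?thesis .
    qed
  qed (use T in auto)
qed

section \<open>KMS and gauge-invariant functionals\<close>

context etale_gpd
begin

lemma KMS_vanishes_on_coboundary:
  fixes h :: "'g \<Rightarrow> real"
  assumes \<omega>: "Cc_linear \<omega>" and kms: "KMS r m i c \<beta> \<omega>" and c: "real_cocycle r s m c"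
    and F: "F \<in> Cc" and h: "continuous_on G0 h"
  shows "\<omega> (\<lambda>g. complex_of_real (h (r g) - h (s g)) * F g) = 0"
proof -
  define H where "H g = (if g \<in> G0 then complex_of_real (h g) else 0)" for g
  have H_off_units: "H g = 0" if "g \<notin> G0" for g
    using that unfolding H_def by simp
  have "continuous_on G0 (\<lambda>g. complex_of_real (h g))"
    using h by (intro continuous_intros)
  then have "continuous_on UNIV H"
    unfolding H_def by (rule continuous_on_clopen_extend_zero[OF open_G0 closed_G0])
  moreover have "compact (closure {g. H g \<noteq> 0})"
  proof (rule compact_closure_subset)
    show "compact (closure G0)" using compact_G0 closed_G0 by simp
    show "{g. H g \<noteq> 0} \<subseteq> G0" using H_off_units by blast
  qed
  ultimately have H: "H \<in> Cc" unfolding Cc_def by simp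
  \<comment> \<open>\<open>H\<close> is fixed by the modular group because \<open>c\<close> vanishes on units\<close>
  have "alpha_imag c \<beta> H = H"
    using cocycle_vanishes_on_units[OF groupoid, of c] c H_off_units
    unfolding alpha_imag_def real_cocycle_def by (auto simp: fun_eq_iff)
  then have "\<omega> (conv r m i H F) = \<omega> (conv r m i F H)"
    using kms H F unfolding KMS_def by metis
  moreover have "conv r m i H F = (\<lambda>g. complex_of_real (h (r g)) * F g)"
    using conv_unit_left[OF H_off_units] r_in_G0 unfolding H_def by auto
  moreover have "conv r m i F H = (\<lambda>g. complex_of_real (h (s g)) * F g)"
    using conv_unit_right[OF F H_off_units] s_in_G0 unfolding H_def by (auto simp: mult.commute)
  moreover have "(\<lambda>g. complex_of_real (h (q g)) * F g) \<in> Cc"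
    if "continuous_on UNIV q" "\<And>g. q g \<in> G0" for q
  proof -
    have "continuous_on UNIV (\<lambda>g. h (q g))"
      using continuous_on_compose2[OF h that(1)] that(2) by blast
    then have "continuous_on UNIV (\<lambda>g. complex_of_real (h (q g)))"
      by (intro continuous_intros)
    then show ?thesis using F by (rule Cc_mult_left)
  qed
  ultimately have "\<omega> (\<lambda>g. complex_of_real (h (r g)) * F g - complex_of_real (h (s g)) * F g) = 0"
    using Cc_linear_diff[OF \<omega>] continuous_r continuous_s r_in_G0 s_in_G0 by simp
  then show ?thesis by (simp add: left_diff_distrib)
qed

end

context etale_gpd
begin

lemma KMS_vanishes_off_isotropy:
  assumes \<omega>: "Cc_linear \<omega>" and kms: "KMS r m i c \<beta> \<omega>" and c: "real_cocycle r s m c"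
    and f: "f \<in> Cc" and off_isotropy: "\<And>g. g \<in> closure {g. f g \<noteq> 0} \<Longrightarrow> r g \<noteq> s g"
  shows "\<omega> f = 0"
proof -
  define K where "K = closure {g. f g \<noteq> 0}"
  have K: "compact K" using Cc_compact_support[OF f] unfolding K_def .
  have "\<forall>t\<in>K. \<exists>h :: 'g \<Rightarrow> real. continuous_on G0 h \<and> h (r t) \<noteq> h (s t)"
  proof
    fix t assume "t \<in> K"
    then have "r t \<noteq> s t" using off_isotropy unfolding K_def by blast
    then obtain h :: "'g \<Rightarrow> real" where "continuous_on G0 h" "h (r t) \<noteq> h (s t)"
      by (rule compact_Hausdorff_separating_function[OF compact_G0 r_in_G0 s_in_G0])
    then show "\<exists>h :: 'g \<Rightarrow> real. continuous_on G0 h \<and> h (r t) \<noteq> h (s t)" by blast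
  qed
  then obtain h :: "'g \<Rightarrow> 'g \<Rightarrow> real"
    where "\<forall>t\<in>K. continuous_on G0 (h t) \<and> h t (r t) \<noteq> h t (s t)"
    by (rule bchoice[elim_format]) blast
  then have h: "continuous_on G0 (h t) \<and> h t (r t) \<noteq> h t (s t)" if "t \<in> K" for t
    using that by blast
  define d where "d t x = h t (r x) - h t (s x)" for t x
  have d: "continuous_on UNIV (d t)" if "t \<in> K" for t
  proof -
    have comp: "continuous_on UNIV (\<lambda>x. h t (q x))" if "continuous_on UNIV q" "\<And>x. q x \<in> G0" for q
      using continuous_on_compose2[OF conjunct1[OF h[OF \<open>t \<in> K\<close>]] that(1)] that(2) by blast
    show ?thesis
      unfolding d_def using comp[OF continuous_r r_in_G0] comp[OF continuous_s s_in_G0]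
      by (intro continuous_intros)
  qed
  obtain T e where T: "finite T" "T \<subseteq> K" and e: "\<And>t. t \<in> T \<Longrightarrow> continuous_on UNIV (e t)"
    and partition: "\<And>x. x \<in> K \<Longrightarrow> (\<Sum>t\<in>T. d t x * e t x) = 1"
    by (rule compact_partition_of_unity_by_products[OF K d]) (use h in \<open>auto simp: d_def\<close>)
  define F where "F t x = complex_of_real (e t x) * f x" for t x
  have F: "F t \<in> Cc" if "t \<in> T" for t
    unfolding F_def using e[OF that] f by (intro Cc_mult_left continuous_intros)
  have "f = (\<lambda>x. \<Sum>t\<in>T. complex_of_real (d t x) * F t x)"
  proof
    fix x show "f x = (\<Sum>t\<in>T. complex_of_real (d t x) * F t x)"
    proof (cases "x \<in> K")
      case True
      have "(\<Sum>t\<in>T. complex_of_real (d t x) * F t x) = complex_of_real (\<Sum>t\<in>T. d t x * e t x) * f x"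
        unfolding F_def by (simp add: sum_distrib_right mult.assoc)
      then show ?thesis using partition[OF True] by simp
    next
      case False
      then have "f x = 0" using closure_subset[of "{g. f g \<noteq> 0}"] unfolding K_def by blast
      then show ?thesis by (simp add: F_def)
    qed
  qed
  then have "\<omega> f = (\<Sum>t\<in>T. \<omega> (\<lambda>x. complex_of_real (d t x) * F t x))"
    using Cc_linear_sum[OF \<omega> T(1)] F d T(2)
    by (simp add: Cc_mult_left continuous_on_of_real_o_iff subsetD)
  also have "\<dots> = 0"
    using KMS_vanishes_on_coboundary[OF \<omega> kms c F] h T(2) unfolding d_def by (simp add: subsetD)
  finally show ?thesis .
qed

end

lemma closed_fibre_of_open_fibres:
  assumes "\<And>a. open (\<Phi> -` {a})"
  shows "closed (\<Phi> -` {a})"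
proof -
  have "- (\<Phi> -` {a}) = (\<Union>b\<in>- {a}. \<Phi> -` {b})" by auto
  moreover have "open (\<Union>b\<in>- {a}. \<Phi> -` {b})" using assms by (intro open_UN ballI)
  ultimately show ?thesis unfolding closed_def by simp
qed

context
  fixes \<omega> :: "('g::topological_space \<Rightarrow> complex) \<Rightarrow> complex" and \<Phi> :: "'g \<Rightarrow> 'a::ab_group_add"
  assumes \<omega>: "Cc_linear \<omega>"
    and gauge_invariant: "\<forall>\<xi>. character \<xi> \<longrightarrow> (\<forall>f\<in>Cc. \<omega> (gauge \<Phi> \<xi> f) = \<omega> f)"
begin

lemma gauge_invariant_vanishes_on_fibre:
  assumes "a \<noteq> 0" and f: "f \<in> Cc" and "\<And>g. f g \<noteq> 0 \<Longrightarrow> \<Phi> g = a"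
  shows "\<omega> f = 0"
proof -
  obtain \<xi> where \<xi>: "character \<xi>" "\<xi> a \<noteq> 1" by (rule exists_character_ne_1[OF \<open>a \<noteq> 0\<close>])
  have "gauge \<Phi> \<xi> f = (\<lambda>g. \<xi> a * f g)"
  proof
    fix g show "gauge \<Phi> \<xi> f g = \<xi> a * f g"
      unfolding gauge_def by (cases "f g = 0") (simp_all add: assms(3))
  qed
  moreover have "\<omega> (gauge \<Phi> \<xi> f) = \<omega> f" using gauge_invariant \<xi>(1) f by blast
  ultimately have "\<xi> a * \<omega> f = \<omega> f" using Cc_linear_scaleC[OF \<omega> f] by simp
  then have "(\<xi> a - 1) * \<omega> f = 0" by (simp add: algebra_simps)
  with \<xi>(2) show ?thesis by simp
qed

lemma gauge_invariant_restrict_kernel: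
  assumes fibres: "\<And>a. open (\<Phi> -` {a})" and f: "f \<in> Cc"
  shows "\<omega> f = \<omega> (\<lambda>g. if \<Phi> g = 0 then f g else 0)"
proof -
  define f\<^sub>a where "f\<^sub>a a g = (if \<Phi> g = a then f g else 0)" for a g
  have f\<^sub>a: "f\<^sub>a a \<in> Cc" for a
    unfolding f\<^sub>a_def using Cc_restrict_clopen[OF fibres closed_fibre_of_open_fibres[OF fibres] f]
    by (simp add: vimage_def)
  \<comment> \<open>the support of \<open>f\<close> is compact and the fibres of \<open>\<Phi>\<close> are open, so \<open>\<Phi>\<close> takes finitely many values on it\<close>
  obtain A where A: "finite A" "closure {g. f g \<noteq> 0} \<subseteq> (\<Union>a\<in>A. \<Phi> -` {a})"
    by (rule compactE_image[OF Cc_compact_support[OF f], of UNIV "\<lambda>a. \<Phi> -` {a}"])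
      (use fibres in auto)
  have decompose: "(\<lambda>g. f g - f\<^sub>a 0 g) = (\<lambda>g. \<Sum>a\<in>A - {0}. f\<^sub>a a g)"
  proof
    fix g show "f g - f\<^sub>a 0 g = (\<Sum>a\<in>A - {0}. f\<^sub>a a g)"
    proof (cases "f g = 0 \<or> \<Phi> g = 0")
      case True
      then have "f\<^sub>a a g = 0" if "a \<noteq> 0" for a
        using that unfolding f\<^sub>a_def by auto
      then have "(\<Sum>a\<in>A - {0}. f\<^sub>a a g) = 0" by (intro sum.neutral) simp
      moreover have "f g - f\<^sub>a 0 g = 0" using True unfolding f\<^sub>a_def by auto
      ultimately show ?thesis by simp
    next
      case False
      then have "g \<in> closure {g. f g \<noteq> 0}" using closure_subset[of "{g. f g \<noteq> 0}"] by blast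
      with A(2) False have "\<Phi> g \<in> A - {0}" by blast
      moreover have "(\<Sum>a\<in>A - {0}. f\<^sub>a a g) = (if \<Phi> g \<in> A - {0} then f g else 0)"
        unfolding f\<^sub>a_def using A(1) by (simp add: sum.delta')
      ultimately show ?thesis using False unfolding f\<^sub>a_def by simp
    qed
  qed
  have "\<omega> f - \<omega> (f\<^sub>a 0) = \<omega> (\<lambda>g. \<Sum>a\<in>A - {0}. f\<^sub>a a g)"
    unfolding decompose[symmetric] by (rule Cc_linear_diff[OF \<omega> f f\<^sub>a, symmetric])
  also have "\<dots> = (\<Sum>a\<in>A - {0}. \<omega> (f\<^sub>a a))"
    using Cc_linear_sum[OF \<omega>, of "A - {0}" f\<^sub>a] A(1) f\<^sub>a by simp
  also have "\<dots> = 0"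
    by (intro sum.neutral ballI gauge_invariant_vanishes_on_fibre f\<^sub>a) (auto simp: f\<^sub>a_def split: if_splits)
  finally show ?thesis unfolding f\<^sub>a_def by simp
qed

end

theorem lemma3p1:
  fixes G0 :: "'g::{t2_space,second_countable_topology} set"
    and r s i :: "'g \<Rightarrow> 'g" and m :: "'g \<Rightarrow> 'g \<Rightarrow> 'g"
    and \<Phi> :: "'g \<Rightarrow> 'a::ab_group_add"
    and c :: "'g \<Rightarrow> real" and \<beta> :: real
    and \<omega> :: "('g \<Rightarrow> complex) \<Rightarrow> complex"
  assumes G: "etale_groupoid G0 r s m i"
    and A_countable: "countable (UNIV :: 'a set)"
    and Phi: "discrete_cocycle r s m \<Phi>"
    and Phi_ker: "\<forall>x\<in>G0. \<forall>g. r g = x \<and> s g = x \<and> \<Phi> g = 0 \<longrightarrow> g = x"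
    and c: "real_cocycle r s m c"
    and state: "groupoid_state G0 r m i \<omega>"
    and kms: "KMS r m i c \<beta> \<omega>"
    and gauge_inv: "\<forall>\<xi>. character \<xi> \<longrightarrow> (\<forall>f\<in>Cc. \<omega> (gauge \<Phi> \<xi> f) = \<omega> f)"
  shows "\<forall>f\<in>Cc. \<omega> f = \<omega> (cond_exp G0 f)"
proof
  fix f :: "'g \<Rightarrow> complex" assume f: "f \<in> Cc"
  interpret etale_gpd G0 r s m i by (rule etale_gpd.intro[OF G])
  have \<omega>: "Cc_linear \<omega>" using state by (rule groupoid_state_imp_Cc_linear)
  have fibres: "\<And>a. open (\<Phi> -` {a})" using Phi unfolding discrete_cocycle_def by blast
  define Z where "Z = \<Phi> -` {0} - G0"
  define f\<^sub>0 where "f\<^sub>0 = (\<lambda>g. if \<Phi> g = 0 then f g else 0)"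
  have f\<^sub>0: "f\<^sub>0 \<in> Cc"
    unfolding f\<^sub>0_def using Cc_restrict_clopen[OF fibres closed_fibre_of_open_fibres[OF fibres] f, of 0]
    by (simp add: vimage_def)
  have P: "cond_exp G0 f \<in> Cc"
    unfolding cond_exp_def[abs_def] by (rule Cc_restrict_clopen[OF open_G0 closed_G0 f])
  have "\<Phi> g = 0" if "g \<in> G0" for g
    using cocycle_vanishes_on_units[OF groupoid _ that, of \<Phi>] Phi
    unfolding discrete_cocycle_def by simp
  then have "{g. f\<^sub>0 g - cond_exp G0 f g \<noteq> 0} \<subseteq> Z"
    unfolding Z_def f\<^sub>0_def cond_exp_def by auto
  moreover have "closed Z"
    unfolding Z_def using closed_fibre_of_open_fibres[OF fibres] open_G0 by (intro closed_Diff)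
  ultimately have support: "closure {g. f\<^sub>0 g - cond_exp G0 f g \<noteq> 0} \<subseteq> Z"
    by (rule closure_minimal)
  \<comment> \<open>on \<open>Z\<close> no arrow is isotropic, as \<open>\<Phi>\<close> is injective on isotropy groups\<close>
  have "r g \<noteq> s g" if "g \<in> Z" for g
  proof
    assume "r g = s g"
    moreover have "\<Phi> g = 0" "g \<notin> G0" using that unfolding Z_def by auto
    ultimately have "g = r g" using spec[OF bspec[OF Phi_ker r_in_G0[of g]], of g] by simp
    with \<open>g \<notin> G0\<close> r_in_G0[of g] show False by simp
  qed
  with support have "\<omega> (\<lambda>g. f\<^sub>0 g - cond_exp G0 f g) = 0"
    by (intro KMS_vanishes_off_isotropy[OF \<omega> kms c Cc_diff[OF f\<^sub>0 P]]) blast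
  then have "\<omega> f\<^sub>0 = \<omega> (cond_exp G0 f)"
    using Cc_linear_diff[OF \<omega> f\<^sub>0 P] by simp
  moreover have "\<omega> f = \<omega> f\<^sub>0"
    unfolding f\<^sub>0_def using gauge_invariant_restrict_kernel[OF \<omega> gauge_inv fibres f] .
  ultimately show "\<omega> f = \<omega> (cond_exp G0 f)" by simp
qed

end
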